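(* Let $K$ be a field, $w(x)\in K[x]$ with $d=\deg w\ge2$, $\phi$ the $K$-algebra endomorphism of $K[x]$ with $\phi(x)=w(x)$, and $\delta=\mathrm{id}-\phi$. Let $W=K[w(x)]$ and $U$ the $K$-subspace spanned by $x^m$ for positive integers $m$ not divisible by $d$; for $f\in K[x]$ write uniquely $f=f_1+f_2$ with $f_1\in U$, $f_2\in W$, and set $\ell(f)=\deg f_1$ if $f_1\ne0$, $\ell(f)=0$ otherwise. Then for every nonzero $f\in\operatorname{Im}\delta$: 1) if $f\in W$, say $f(x)=\tilde f(w(x))$ with $\tilde f\in K[x]$, then $\tilde f\in\operatorname{Im}\delta$; 2) if $f\notin W$, then $\deg f\ge d\,\ell(f)\ge d$.
   Context: $\mathrm{id}$ is the identity map of $K[x]$. *)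

theory Defs
  imports "HOL-Computational_Algebra.Polynomial"
begin

definition delta_op :: "'a::field poly \<Rightarrow> 'a poly \<Rightarrow> 'a poly" where
  "delta_op w f = f - pcompose f w"

definition im_delta :: "'a::field poly \<Rightarrow> 'a poly set" where
  "im_delta w = range (delta_op w)"

definition W_sub :: "'a::field poly \<Rightarrow> 'a poly set" where
  "W_sub w = {pcompose g w | g. True}"

definition U_sub :: "'a::field poly \<Rightarrow> 'a poly set" where
  "U_sub w = {f. \<forall>m. coeff f m \<noteq> 0 \<longrightarrow> 0 < m \<and> \<not> degree w dvd m}"

definition U_part :: "'a::field poly \<Rightarrow> 'a poly \<Rightarrow> 'a poly" where
  "U_part w f = (THE f1. f1 \<in> U_sub w \<and> f - f1 \<in> W_sub w)"

definition ell :: "'a::field poly \<Rightarrow> 'a poly \<Rightarrow> nat" where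
  "ell w f = (if U_part w f = 0 then 0 else degree (U_part w f))"

end

theory Submission
  imports Defs
begin

text \<open>Write \<open>f = g - g \<circ> w\<close>. Since \<open>g \<circ> w \<in> W\<close>, the \<open>U\<close>-components of \<open>f\<close> and \<open>g\<close>
  coincide, and \<open>f \<in> W\<close> iff \<open>g \<in> W\<close>. If \<open>f \<in> W\<close>, then \<open>g = h \<circ> w\<close> and
  \<open>f = (h - h \<circ> w) \<circ> w\<close>, so \<open>f\<^sup>~ = \<delta> h\<close> because composition with the nonconstant \<open>w\<close>
  is injective. Otherwise the \<open>U\<close>-component \<open>g\<^sub>1\<close> of \<open>g\<close> is nonzero, hence of positive degree,
  and (the decomposition being obtained by stripping leading terms) \<open>deg g\<^sub>1 \<le> deg g\<close>; as \<open>d \<ge> 2\<close>,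
  the term \<open>g \<circ> w\<close> dominates and \<open>deg f = d \<cdot> deg g \<ge> d \<cdot> deg g\<^sub>1 = d \<cdot> \<ell>(f) \<ge> d\<close>.\<close>

lemma pcompose_in_W_sub: "pcompose g w \<in> W_sub w"
  unfolding W_sub_def by blast

lemma W_sub_add: "a \<in> W_sub w \<Longrightarrow> b \<in> W_sub w \<Longrightarrow> a + b \<in> W_sub w"
  unfolding W_sub_def by (auto simp: pcompose_add[symmetric])

lemma W_sub_diff: "a \<in> W_sub w \<Longrightarrow> b \<in> W_sub w \<Longrightarrow> a - b \<in> W_sub w"
  unfolding W_sub_def by (auto simp: pcompose_diff[symmetric])

lemma W_sub_smult: "a \<in> W_sub w \<Longrightarrow> smult c a \<in> W_sub w"
  unfolding W_sub_def by (auto simp: pcompose_smult[symmetric])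

lemma U_sub_add: "a \<in> U_sub w \<Longrightarrow> b \<in> U_sub w \<Longrightarrow> a + b \<in> U_sub w"
  unfolding U_sub_def by (simp, metis add.right_neutral)

lemma U_sub_diff: "a \<in> U_sub w \<Longrightarrow> b \<in> U_sub w \<Longrightarrow> a - b \<in> U_sub w"
  unfolding U_sub_def by (simp, metis)

lemma U_sub_smult: "a \<in> U_sub w \<Longrightarrow> smult c a \<in> U_sub w"
  unfolding U_sub_def by auto

lemma zero_in_U_sub: "0 \<in> U_sub w"
  by (simp add: U_sub_def)

lemma degree_pos_if_in_U_sub:
  assumes "f \<in> U_sub w" "f \<noteq> 0"
  shows "0 < degree f"
proof -
  have "coeff f (degree f) \<noteq> 0" using assms(2) by simp
  then show ?thesis using assms(1) unfolding U_sub_def by blast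
qed

lemma U_sub_Int_W_sub: "U_sub w \<inter> W_sub w = {0}"
proof (intro equalityI subsetI)
  fix f assume f: "f \<in> U_sub w \<inter> W_sub w"
  then obtain h where "f = pcompose h w" unfolding W_sub_def by blast
  then have "degree w dvd degree f" by (simp add: degree_pcompose)
  then have "\<not> (0 < degree f \<and> \<not> degree w dvd degree f)" by blast
  then have "coeff f (degree f) = 0" using f unfolding U_sub_def by blast
  then show "f \<in> {0}" by simp
next
  fix f :: "'a poly" assume "f \<in> {0}"
  then show "f \<in> U_sub w \<inter> W_sub w"
    using zero_in_U_sub pcompose_in_W_sub[of 0 w] by simp
qed

lemma exists_monic_in_U_sub_or_W_sub:
  fixes w :: "'a::field poly"
  assumes "0 < n"
  shows "\<exists>p. degree p = n \<and> lead_coeff p = 1 \<and> (p \<in> U_sub w \<or> p \<in> W_sub w)"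
proof (cases "degree w dvd n")
  case True
  then obtain k where k: "n = degree w * k" by blast
  define q where "q = pcompose (monom (1::'a) k) w"
  have "degree q = n"
    unfolding q_def k by (simp add: degree_pcompose degree_monom_eq mult.commute)
  then have "lead_coeff q \<noteq> 0" using assms by auto
  moreover have "smult (inverse (lead_coeff q)) q \<in> W_sub w"
    unfolding q_def by (intro W_sub_smult pcompose_in_W_sub)
  ultimately show ?thesis
    using \<open>degree q = n\<close> by (intro exI[of _ "smult (inverse (lead_coeff q)) q"]) simp
next
  case False
  then have "monom 1 n \<in> U_sub w"
    using assms unfolding U_sub_def by auto
  then show ?thesis by (intro exI[of _ "monom 1 n"]) (simp add: degree_monom_eq)
qed

lemma degree_cancel_lead_coeff:
  fixes f p :: "'a::comm_ring_1 poly"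
  assumes "degree p = degree f" "lead_coeff p = 1" "0 < degree f"
  shows "degree (f - smult (lead_coeff f) p) < degree f"
  using assms by (intro degree_lessI) (auto simp: coeff_eq_0 le_less)

lemma U_W_decomposition:
  fixes f w :: "'a::field poly"
  shows "\<exists>f1. f1 \<in> U_sub w \<and> f - f1 \<in> W_sub w \<and> degree f1 \<le> degree f"
proof (induction "degree f" arbitrary: f rule: less_induct)
  case less
  show ?case
  proof (cases "degree f = 0")
    case True
    then obtain c where "f = [:c:]" by (metis degree_eq_zeroE)
    then have "f - 0 \<in> W_sub w" using pcompose_in_W_sub[of "[:c:]" w] by simp
    then show ?thesis using zero_in_U_sub by (intro exI[of _ 0]) simp
  next
    case False
    then obtain p where p: "degree p = degree f" "lead_coeff p = 1" "p \<in> U_sub w \<or> p \<in> W_sub w"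
      using exists_monic_in_U_sub_or_W_sub by blast
    define c where "c = lead_coeff f"
    have "degree (f - smult c p) < degree f"
      using p False unfolding c_def by (intro degree_cancel_lead_coeff) auto
    then obtain h1 where h1: "h1 \<in> U_sub w" "f - smult c p - h1 \<in> W_sub w"
      "degree h1 < degree f"
      using less by fastforce
    from p(3) show ?thesis
    proof
      assume "p \<in> U_sub w"
      moreover have "degree (h1 + smult c p) \<le> degree f"
        using h1(3) p(1) by (intro degree_add_le) (auto intro: order_trans[OF degree_smult_le])
      moreover have "f - (h1 + smult c p) = f - smult c p - h1" by simp
      ultimately show ?thesis
        using h1 U_sub_add U_sub_smult by metis
    next
      assume "p \<in> W_sub w"
      then have "f - h1 = (f - smult c p - h1) + smult c p" by simp
      then have "f - h1 \<in> W_sub w"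
        using h1(2) W_sub_add W_sub_smult \<open>p \<in> W_sub w\<close> by metis
      then show ?thesis using h1 by (intro exI[of _ h1]) auto
    qed
  qed
qed

lemma U_part_eqI:
  assumes "f1 \<in> U_sub w" "f - f1 \<in> W_sub w"
  shows "U_part w f = f1"
  unfolding U_part_def
proof (rule the_equality)
  fix g assume g: "g \<in> U_sub w \<and> f - g \<in> W_sub w"
  have "g - f1 \<in> U_sub w" using g assms U_sub_diff by blast
  moreover have "g - f1 \<in> W_sub w" using W_sub_diff[OF assms(2), of "f - g"] g by simp
  ultimately have "g - f1 \<in> U_sub w \<inter> W_sub w" by blast
  then show "g = f1" unfolding U_sub_Int_W_sub by simp
qed (use assms in simp)

lemma U_part:
  fixes f w :: "'a::field poly"
  shows "U_part w f \<in> U_sub w" "f - U_part w f \<in> W_sub w" "degree (U_part w f) \<le> degree f"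
proof -
  obtain f1 where f1: "f1 \<in> U_sub w" "f - f1 \<in> W_sub w" "degree f1 \<le> degree f"
    using U_W_decomposition by blast
  moreover have "U_part w f = f1" using f1(1,2) by (rule U_part_eqI)
  ultimately show "U_part w f \<in> U_sub w" "f - U_part w f \<in> W_sub w"
    "degree (U_part w f) \<le> degree f" by simp_all
qed

lemma U_part_eq_0_iff: "U_part w f = 0 \<longleftrightarrow> f \<in> W_sub w"
  using U_part(2)[where f = f and w = w] U_part_eqI[OF zero_in_U_sub, where f = f] by auto

lemma U_part_delta_op: "U_part w (delta_op w g) = U_part w g"
proof (rule U_part_eqI)
  show "U_part w g \<in> U_sub w" by (rule U_part)
  have "delta_op w g - U_part w g = (g - U_part w g) - pcompose g w"
    by (simp add: delta_op_def algebra_simps)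
  also have "\<dots> \<in> W_sub w"
    by (intro W_sub_diff U_part(2) pcompose_in_W_sub)
  finally show "delta_op w g - U_part w g \<in> W_sub w" .
qed

lemma delta_op_pcompose: "delta_op w (pcompose h w) = pcompose (delta_op w h) w"
  by (simp add: delta_op_def pcompose_diff)

lemma pcompose_right_cancel:
  fixes a b w :: "'a::field poly"
  assumes "0 < degree w" "pcompose a w = pcompose b w"
  shows "a = b"
  using pcompose_eq_0[of "a - b" w] assms by (simp add: pcompose_diff)

lemma degree_delta_op:
  fixes g w :: "'a::field poly"
  assumes "2 \<le> degree w"
  shows "degree (delta_op w g) = degree g * degree w"
proof (cases "degree g = 0")
  case True
  then show ?thesis by (auto simp: delta_op_def elim: degree_eq_zeroE)
next
  case False
  then have "degree g < degree (- pcompose g w)"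
    using assms by (simp add: degree_pcompose)
  then have "degree (g + - pcompose g w) = degree (pcompose g w)"
    by (subst degree_add_eq_right) simp_all
  then show ?thesis by (simp add: delta_op_def degree_pcompose)
qed

lemma im_delta_pcomposeD:
  fixes ft w :: "'a::field poly"
  assumes "0 < degree w" "pcompose ft w \<in> im_delta w"
  shows "ft \<in> im_delta w"
proof -
  obtain g where g: "pcompose ft w = delta_op w g"
    using assms(2) unfolding im_delta_def by blast
  have "g = delta_op w g + pcompose g w" by (simp add: delta_op_def)
  then have "g \<in> W_sub w"
    using W_sub_add g pcompose_in_W_sub by metis
  then obtain h where "g = pcompose h w" unfolding W_sub_def by blast
  with g have "pcompose ft w = pcompose (delta_op w h) w"
    by (simp add: delta_op_pcompose)
  then have "ft = delta_op w h" using pcompose_right_cancel assms(1) by blast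
  then show ?thesis unfolding im_delta_def by simp
qed

theorem lemma3p10:
  fixes w f :: "'a::field poly"
  assumes "degree w \<ge> 2"
    and "f \<in> im_delta w" and "f \<noteq> 0"
  shows "(f \<in> W_sub w \<longrightarrow> (\<forall>ft. f = pcompose ft w \<longrightarrow> ft \<in> im_delta w))
       \<and> (f \<notin> W_sub w \<longrightarrow> degree f \<ge> degree w * ell w f \<and> degree w * ell w f \<ge> degree w)"
proof (intro conjI impI allI)
  fix ft assume "f = pcompose ft w"
  with assms(2) have "pcompose ft w \<in> im_delta w" by simp
  then show "ft \<in> im_delta w"
    using assms(1) by (intro im_delta_pcomposeD[OF _ \<open>pcompose ft w \<in> im_delta w\<close>]) simp
next
  assume "f \<notin> W_sub w"
  obtain g where f: "f = delta_op w g" using assms(2) unfolding im_delta_def by blast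
  then have Uf: "U_part w f = U_part w g" by (simp add: U_part_delta_op)
  then have "U_part w g \<noteq> 0" using \<open>f \<notin> W_sub w\<close> U_part_eq_0_iff by metis
  then have ell: "ell w f = degree (U_part w g)" by (simp add: ell_def Uf)
  have "0 < ell w f"
    unfolding ell using U_part(1) \<open>U_part w g \<noteq> 0\<close> by (rule degree_pos_if_in_U_sub)
  then show "degree w \<le> degree w * ell w f" by simp
  have "degree f = degree g * degree w"
    unfolding f using assms(1) by (rule degree_delta_op)
  moreover have "ell w f \<le> degree g" unfolding ell by (rule U_part(3))
  ultimately show "degree w * ell w f \<le> degree f" by (simp add: mult.commute)
qed

end
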